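(* Let $n\ge 2$. For $\alpha=(a_1,\dots,a_{n-1})\in PF_{n-1}$ define $\Psi(\alpha)=(n+1-a_1,\,n+1-a_2,\,\dots,\,n+1-a_{n-1},\,n)$. Then $\Psi$ is a bijection from $PF_{n-1}$ onto $PF_{n,n-1}\setminus PF_{n,n-2}$.
   Context: For $n\in\mathbb{N}$ let $[n]=\{1,\dots,n\}$ and $PP_n=[n]^n$. For an integer $k\ge 0$, the $k$-Naples parking rule: there are $n$ spots numbered $1,\dots,n$ west to east, initially empty; cars $c_1,\dots,c_n$ arrive in order, car $c_i$ preferring spot $a_i$. If spot $a_i$ is empty, $c_i$ parks there. Otherwise $c_i$ checks spots $a_i-1,\dots,a_i-k$ in this order (skipping those $<1$) and parks in the first empty one; if all are occupied, it drives east and parks in the first empty spot numbered greater than $a_i$, failing to park if none exists. $PF_{n,k}$ is the set of preferences in $PP_n$ for which all cars park. $PF_{m}=PF_{m,0}$ is the set of classical parking functions of length $m$. *)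

theory Defs
  imports Main
begin

definition PP :: "nat \<Rightarrow> nat list set" where
  "PP n = {xs. length xs = n \<and> set xs \<subseteq> {1..n}}"

(* Spot chosen by a car preferring spot a under the k-Naples rule, given the set
   occ of occupied spots, with n spots in total.  None = the car fails to park. *)
definition naples_spot :: "nat \<Rightarrow> nat \<Rightarrow> nat set \<Rightarrow> nat \<Rightarrow> nat option" where
  "naples_spot n k occ a =
     (if a \<notin> occ then Some a
      else if (\<exists>j\<in>{1..k}. 1 \<le> a - j \<and> j < a \<and> a - j \<notin> occ)
        then Some (a - (LEAST j. j \<in> {1..k} \<and> j < a \<and> a - j \<notin> occ))
      else if (\<exists>s. a < s \<and> s \<le> n \<and> s \<notin> occ)
        then Some (LEAST s. a < s \<and> s \<le> n \<and> s \<notin> occ)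
      else None)"

fun naples_run :: "nat \<Rightarrow> nat \<Rightarrow> nat set \<Rightarrow> nat list \<Rightarrow> nat set option" where
  "naples_run n k occ [] = Some occ"
| "naples_run n k occ (a # as) =
     (case naples_spot n k occ a of
        None \<Rightarrow> None
      | Some s \<Rightarrow> naples_run n k (insert s occ) as)"

definition PF_k :: "nat \<Rightarrow> nat \<Rightarrow> nat list set" where
  "PF_k n k = {xs \<in> PP n. naples_run n k {} xs \<noteq> None}"

definition PF :: "nat \<Rightarrow> nat list set" where
  "PF m = PF_k m 0"

definition Psi :: "nat \<Rightarrow> nat list \<Rightarrow> nat list" where
  "Psi n \<alpha> = map (\<lambda>a. n + 1 - a) \<alpha> @ [n]"

end

theory Submission
  imports Defs
begin

(* Reflecting the spots by x |-> n + 1 - x turns a classical car among spots 1..n-1, which drives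
   east to the first free spot, into a car among spots 2..n which backs up to the first free spot,
   at distance at most n - 2; a classical failure becomes a back-up all the way to spot 1, at
   distance at most n - 1.  So the first n - 1 cars of Psi n alpha fill spots 2..n under both rules,
   and the last car, preferring n, needs exactly n - 1 backward steps.  Conversely, the (n-1)- and
   (n-2)-Naples rules only differ for a car preferring n that finds exactly spot 1 free, which forces
   a preference in the difference to have the shape Psi n alpha. *)

lemma naples_spot_eq:
  "naples_spot n k occ a =
     (if a \<notin> occ then Some a
      else if \<exists>j. j \<in> {1..k} \<and> j < a \<and> a - j \<notin> occ
        then Some (a - (LEAST j. j \<in> {1..k} \<and> j < a \<and> a - j \<notin> occ))
      else if \<exists>s. a < s \<and> s \<le> n \<and> s \<notin> occ
        then Some (LEAST s. a < s \<and> s \<le> n \<and> s \<notin> occ)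
      else None)"
proof -
  have "(\<exists>j\<in>{1..k}. 1 \<le> a - j \<and> j < a \<and> a - j \<notin> occ) \<longleftrightarrow>
        (\<exists>j. j \<in> {1..k} \<and> j < a \<and> a - j \<notin> occ)"
    by force
  then show ?thesis unfolding naples_spot_def by (simp only:)
qed

lemma naples_spot_SomeD:
  assumes "naples_spot n k occ a = Some s"
  shows "s \<notin> occ \<and> (s = a \<or> 0 < s \<and> s < a \<or> a < s \<and> s \<le> n)"
proof -
  let ?B = "\<lambda>j. j \<in> {1..k} \<and> j < a \<and> a - j \<notin> occ"
  let ?F = "\<lambda>s. a < s \<and> s \<le> n \<and> s \<notin> occ"
  show ?thesis
  proof (cases "a \<in> occ")
    case False
    then show ?thesis using assms by (simp add: naples_spot_eq)
  next
    case occupied: True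
    show ?thesis
    proof (cases "\<exists>j. ?B j")
      case True
      with occupied assms have "s = a - Least ?B"
        unfolding naples_spot_eq by (simp only: if_True if_False not_True_eq_False option.inject)
      then show ?thesis using LeastI_ex[OF True] by auto
    next
      case False
      with occupied assms have "\<exists>s. ?F s" "s = Least ?F"
        unfolding naples_spot_eq by (simp_all only: if_True if_False not_True_eq_False option.inject
          split: if_split_asm) auto
      then show ?thesis using LeastI_ex[of ?F] by auto
    qed
  qed
qed

lemma naples_spot_backward:
  assumes "a \<in> occ" "s \<notin> occ" "0 < s" "s < a" "a - s \<le> k"
    and "\<And>t. s < t \<Longrightarrow> t < a \<Longrightarrow> t \<in> occ"
  shows "naples_spot n k occ a = Some s"
proof -
  let ?B = "\<lambda>j. j \<in> {1..k} \<and> j < a \<and> a - j \<notin> occ"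
  have "?B (a - s)" using assms by auto
  moreover have "Least ?B = a - s"
  proof (rule Least_equality)
    fix j assume "?B j"
    then show "a - s \<le> j" using assms(6)[of "a - j"] by fastforce
  qed (use assms in auto)
  ultimately show ?thesis using assms(1) unfolding naples_spot_eq by auto
qed

lemma naples_spot_Suc_eq:
  assumes "\<not> (a \<in> occ \<and> Suc k < a \<and> a - Suc k \<notin> occ \<and> (\<forall>j\<in>{1..k}. a - j \<in> occ))"
  shows "naples_spot n (Suc k) occ a = naples_spot n k occ a"
proof -
  let ?B = "\<lambda>k j. j \<in> {1..k} \<and> j < a \<and> a - j \<notin> occ"
  show ?thesis
  proof (cases "\<exists>j. ?B k j")
    case True
    then obtain j where j: "?B k j" ..
    then have "Least (?B k) \<le> j" by (rule Least_le)
    moreover have "?B k (Least (?B k))" using j by (rule LeastI)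
    ultimately have "Least (?B (Suc k)) = Least (?B k)"
    proof (intro Least_equality)
      fix i assume "?B (Suc k) i"
      with \<open>Least (?B k) \<le> j\<close> j show "Least (?B k) \<le> i"
        by (cases "i \<le> k") (auto intro: Least_le)
    qed auto
    moreover have "\<exists>j. ?B (Suc k) j" using j by auto
    ultimately show ?thesis using True unfolding naples_spot_eq by presburger
  next
    case False
    with assms have "a \<notin> occ \<or> \<not> (\<exists>j. ?B (Suc k) j)"
      by (auto simp: le_Suc_eq)
    with False show ?thesis unfolding naples_spot_eq by auto
  qed
qed

lemma naples_spot_classical_occupied:
  "a \<in> occ \<Longrightarrow> naples_spot m 0 occ a =
     (if \<exists>s. a < s \<and> s \<le> m \<and> s \<notin> occ
      then Some (LEAST s. a < s \<and> s \<le> m \<and> s \<notin> occ) else None)"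
  by (simp add: naples_spot_def)

lemma naples_spot_classical_SomeD:
  assumes "naples_spot m 0 occ a = Some s" "a \<in> occ"
  shows "a < s \<and> s \<le> m \<and> s \<notin> occ \<and> (\<forall>t. a < t \<and> t < s \<longrightarrow> t \<in> occ)"
proof -
  let ?F = "\<lambda>s. a < s \<and> s \<le> m \<and> s \<notin> occ"
  have eq: "(if \<exists>s. ?F s then Some (Least ?F) else None) = Some s"
    using assms(1) unfolding naples_spot_classical_occupied[OF assms(2)] .
  then have ex: "\<exists>s. ?F s" by (metis option.distinct(1))
  with eq have s: "s = Least ?F" by simp
  have "t \<in> occ" if "a < t" "t < s" for t
    using not_less_Least[of t ?F] that s LeastI_ex[OF ex] by auto
  with s LeastI_ex[OF ex] show ?thesis by auto
qed

lemma naples_spot_classical_NoneD: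
  assumes "naples_spot m 0 occ a = None"
  shows "a \<in> occ \<and> (\<forall>t. a < t \<and> t \<le> m \<longrightarrow> t \<in> occ)"
proof -
  have "a \<in> occ" using assms by (cases "a \<in> occ") (simp_all add: naples_spot_def)
  moreover from assms have "\<not> (\<exists>s. a < s \<and> s \<le> m \<and> s \<notin> occ)"
    unfolding naples_spot_classical_occupied[OF \<open>a \<in> occ\<close>] by (metis option.distinct(1))
  ultimately show ?thesis by auto
qed

lemma naples_run_append:
  "naples_run n k occ (xs @ ys) =
     (case naples_run n k occ xs of None \<Rightarrow> None | Some occ' \<Rightarrow> naples_run n k occ' ys)"
  by (induction xs arbitrary: occ) (auto split: option.split)

lemma naples_run_mono: "naples_run n k occ xs = Some occ' \<Longrightarrow> occ \<subseteq> occ'"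
  by (induction xs arbitrary: occ) (auto split: option.splits)

lemma naples_run_Some_occupied:
  assumes "naples_run n k occ xs = Some occ'" "finite occ" "occ \<subseteq> {1..n}" "set xs \<subseteq> {1..n}"
  shows "occ' \<subseteq> {1..n} \<and> card occ' = card occ + length xs"
  using assms
proof (induction xs arbitrary: occ)
  case (Cons a xs)
  then obtain s where s: "naples_spot n k occ a = Some s"
    and run: "naples_run n k (insert s occ) xs = Some occ'"
    by (auto split: option.splits)
  have "s \<notin> occ" "s \<in> {1..n}"
    using naples_spot_SomeD[OF s] Cons.prems by auto
  with Cons.IH[OF run] Cons.prems show ?case by simp
qed simp

lemma naples_run_preferences_occupied:
  "naples_run n k occ xs = Some occ' \<Longrightarrow> set xs \<subseteq> occ'"
proof (induction xs arbitrary: occ)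
  case (Cons a xs)
  then obtain s where s: "naples_spot n k occ a = Some s"
    and run: "naples_run n k (insert s occ) xs = Some occ'"
    by (auto split: option.splits)
  have "a \<in> insert s occ"
    using s by (cases "a \<in> occ") (auto simp: naples_spot_def)
  then show ?case using naples_run_mono[OF run] Cons.IH[OF run] by auto
qed simp

definition mirror :: "nat \<Rightarrow> nat \<Rightarrow> nat" where
  "mirror n x = n + 1 - x"

lemma mirror_mirror: "t \<le> n + 1 \<Longrightarrow> mirror n (mirror n t) = t"
  by (simp add: mirror_def)

lemma mem_image_mirror_iff:
  assumes "A \<subseteq> {1..n}" "t \<le> n"
  shows "t \<in> mirror n ` A \<longleftrightarrow> mirror n t \<in> A"
proof
  assume "t \<in> mirror n ` A"
  then obtain b where "b \<in> A" "t = mirror n b" by blast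
  with assms(1) show "mirror n t \<in> A" by (auto simp: mirror_mirror)
next
  assume "mirror n t \<in> A"
  then show "t \<in> mirror n ` A" using mirror_mirror[of t n] assms(2) by force
qed

lemma image_mirror_atLeastAtMost:
  assumes "b \<le> n"
  shows "mirror n ` {a..b} = {mirror n b..mirror n a}"
proof
  show "{mirror n b..mirror n a} \<subseteq> mirror n ` {a..b}"
  proof
    fix t assume "t \<in> {mirror n b..mirror n a}"
    with assms have "t = mirror n (mirror n t)" "mirror n t \<in> {a..b}"
      by (auto simp: mirror_def)
    then show "t \<in> mirror n ` {a..b}" by blast
  qed
qed (use assms in \<open>auto simp: mirror_def\<close>)

lemma naples_spot_mirror_classical:
  assumes "occ \<subseteq> {1..n - 1}" "a \<in> {1..n - 1}" "n - 2 \<le> k"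
    and "naples_spot (n - 1) 0 occ a = Some s"
  shows "naples_spot n k (mirror n ` occ) (mirror n a) = Some (mirror n s)"
proof -
  have occ: "occ \<subseteq> {1..n}" by (rule order_trans[OF assms(1)]) auto
  show ?thesis
  proof (cases "a \<in> occ")
    case False
    with assms(4) have "s = a" by (simp add: naples_spot_eq)
    moreover have "mirror n a \<notin> mirror n ` occ"
    proof -
      have "mirror n a \<le> n" "mirror n (mirror n a) = a"
        using assms(2) by (auto simp: mirror_def)
      with False show ?thesis by (simp add: mem_image_mirror_iff[OF occ])
    qed
    ultimately show ?thesis by (simp add: naples_spot_eq)
  next
    case True
    note s = naples_spot_classical_SomeD[OF assms(4) True]
    show ?thesis
    proof (rule naples_spot_backward)
      fix t assume "mirror n s < t" "t < mirror n a"
      then have "a < mirror n t" "mirror n t < s" "t \<le> n" using s by (auto simp: mirror_def)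
      with s show "t \<in> mirror n ` occ" by (simp add: mem_image_mirror_iff[OF occ])
    next
      have "mirror n s \<le> n" "mirror n (mirror n s) = s"
        using s by (auto simp: mirror_def)
      with s show "mirror n s \<notin> mirror n ` occ" by (simp add: mem_image_mirror_iff[OF occ])
    qed (use True s assms(2,3) in \<open>auto simp: mirror_def\<close>)
  qed
qed

lemma naples_spot_mirror_classical_None:
  assumes "occ \<subseteq> {1..n - 1}" "a \<in> {1..n - 1}"
    and "naples_spot (n - 1) 0 occ a = None"
  shows "naples_spot n (n - 1) (mirror n ` occ) (mirror n a) = Some 1"
proof -
  have occ: "occ \<subseteq> {1..n}" by (rule order_trans[OF assms(1)]) auto
  note full = naples_spot_classical_NoneD[OF assms(3)]
  show ?thesis
  proof (rule naples_spot_backward)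
    fix t assume "1 < t" "t < mirror n a"
    then have "a < mirror n t" "mirror n t \<le> n - 1" "t \<le> n" using assms(2) by (auto simp: mirror_def)
    with full show "t \<in> mirror n ` occ" by (simp add: mem_image_mirror_iff[OF occ])
  next
    have "n \<notin> occ"
    proof
      assume "n \<in> occ"
      with assms(1) have "n \<in> {1..n - 1}" by blast
      then show False by auto
    qed
    moreover have "mirror n 1 = n" "1 \<le> n"
      using assms(2) by (auto simp: mirror_def)
    ultimately show "1 \<notin> mirror n ` occ" by (simp add: mem_image_mirror_iff[OF occ])
  qed (use full assms(2) in \<open>auto simp: mirror_def\<close>)
qed

lemma naples_run_mirror_classical:
  assumes "occ \<subseteq> {1..n - 1}" "set xs \<subseteq> {1..n - 1}" "n - 2 \<le> k"
    and "naples_run (n - 1) 0 occ xs = Some occ'"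
  shows "naples_run n k (mirror n ` occ) (map (mirror n) xs) = Some (mirror n ` occ')"
  using assms
proof (induction xs arbitrary: occ)
  case (Cons a xs)
  then obtain s where s: "naples_spot (n - 1) 0 occ a = Some s"
    and run: "naples_run (n - 1) 0 (insert s occ) xs = Some occ'"
    by (auto split: option.splits)
  have "s \<in> {1..n - 1}" using naples_spot_SomeD[OF s] Cons.prems(2) by auto
  with Cons.prems have "naples_run n k (mirror n ` insert s occ) (map (mirror n) xs) = Some (mirror n ` occ')"
    by (intro Cons.IH[OF _ _ _ run]) auto
  moreover have "naples_spot n k (mirror n ` occ) (mirror n a) = Some (mirror n s)"
    using naples_spot_mirror_classical[OF Cons.prems(1) _ Cons.prems(3) s] Cons.prems(2) by simp
  ultimately show ?case by simp
qed simp

lemma naples_run_mirror_classical_None: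
  assumes "occ \<subseteq> {1..n - 1}" "set xs \<subseteq> {1..n - 1}"
    and "naples_run (n - 1) 0 occ xs = None"
    and "naples_run n (n - 1) (mirror n ` occ) (map (mirror n) xs) = Some occ'"
  shows "1 \<in> occ'"
  using assms
proof (induction xs arbitrary: occ)
  case (Cons a xs)
  show ?case
  proof (cases "naples_spot (n - 1) 0 occ a")
    case None
    with Cons.prems have "naples_spot n (n - 1) (mirror n ` occ) (mirror n a) = Some 1"
      by (intro naples_spot_mirror_classical_None) auto
    with Cons.prems(4) have "naples_run n (n - 1) (insert 1 (mirror n ` occ)) (map (mirror n) xs) = Some occ'"
      by simp
    then show ?thesis using naples_run_mono by blast
  next
    case (Some s)
    have "s \<in> {1..n - 1}" using naples_spot_SomeD[OF Some] Cons.prems(2) by auto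
    have "naples_spot n (n - 1) (mirror n ` occ) (mirror n a) = Some (mirror n s)"
      using naples_spot_mirror_classical[OF Cons.prems(1) _ _ Some] Cons.prems(2) by simp
    with Cons.prems(4) have "naples_run n (n - 1) (mirror n ` insert s occ) (map (mirror n) xs) = Some occ'"
      by simp
    with Cons.IH[of "insert s occ"] Cons.prems(1-3) Some \<open>s \<in> {1..n - 1}\<close> show ?thesis
      by simp
  qed
qed simp

lemma naples_spot_pred_eq:
  assumes "2 \<le> n" "a \<le> n" "\<not> (a = n \<and> {2..n} \<subseteq> occ \<and> 1 \<notin> occ)"
  shows "naples_spot n (n - 1) occ a = naples_spot n (n - 2) occ a"
proof -
  have "\<not> (a \<in> occ \<and> Suc (n - 2) < a \<and> a - Suc (n - 2) \<notin> occ \<and> (\<forall>j\<in>{1..n - 2}. a - j \<in> occ))"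
  proof
    assume h: "a \<in> occ \<and> Suc (n - 2) < a \<and> a - Suc (n - 2) \<notin> occ \<and> (\<forall>j\<in>{1..n - 2}. a - j \<in> occ)"
    with assms(1,2) have "a = n" by auto
    with h assms(1) have "1 \<notin> occ" by (simp add: Suc_diff_Suc)
    moreover have "{2..n} \<subseteq> occ"
    proof
      fix t assume t: "t \<in> {2..n}"
      show "t \<in> occ"
      proof (cases "t = n")
        case False
        with t have "n - t \<in> {1..n - 2}" "n - (n - t) = t" by auto
        with h \<open>a = n\<close> show ?thesis by metis
      qed (use h \<open>a = n\<close> in simp)
    qed
    ultimately show False using assms(3) \<open>a = n\<close> by blast
  qed
  then have "naples_spot n (Suc (n - 2)) occ a = naples_spot n (n - 2) occ a"
    by (rule naples_spot_Suc_eq)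
  moreover have "Suc (n - 2) = n - 1" using assms(1) by simp
  ultimately show ?thesis by simp
qed

lemma naples_run_pred_None_decomp:
  assumes "2 \<le> n" "set xs \<subseteq> {1..n}"
    and "naples_run n (n - 2) occ xs = None" "naples_run n (n - 1) occ xs \<noteq> None"
  shows "\<exists>us vs occ'. xs = us @ n # vs \<and> naples_run n (n - 1) occ us = Some occ'
           \<and> {2..n} \<subseteq> occ' \<and> 1 \<notin> occ'"
  using assms(2-)
proof (induction xs arbitrary: occ)
  case (Cons a xs)
  show ?case
  proof (cases "a = n \<and> {2..n} \<subseteq> occ \<and> 1 \<notin> occ")
    case True
    then show ?thesis by (intro exI[of _ "[]"] exI[of _ xs] exI[of _ occ]) auto
  next
    case False
    from Cons.prems obtain s where s: "naples_spot n (n - 1) occ a = Some s"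
      and ok: "naples_run n (n - 1) (insert s occ) xs \<noteq> None"
      by (auto split: option.splits)
    have "naples_spot n (n - 2) occ a = Some s"
      using naples_spot_pred_eq[OF assms(1) _ False] s Cons.prems(1) by simp
    with Cons.prems have "naples_run n (n - 2) (insert s occ) xs = None" by simp
    with Cons.IH[OF _ this ok] Cons.prems(1) obtain us vs occ' where
      "xs = us @ n # vs" "naples_run n (n - 1) (insert s occ) us = Some occ'"
      "{2..n} \<subseteq> occ'" "1 \<notin> occ'"
      by auto
    with s show ?thesis by (intro exI[of _ "a # us"] exI[of _ vs] exI[of _ occ']) auto
  qed
qed simp

lemma Psi_eq: "Psi n xs = map (mirror n) xs @ [n]"
  by (simp add: Psi_def mirror_def[abs_def])

lemma set_subset_of_mem_PF: "xs \<in> PF m \<Longrightarrow> set xs \<subseteq> {1..m}"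
  by (simp add: PF_def PF_k_def PP_def)

lemma inj_on_Psi: "inj_on (Psi n) (PF (n - 1))"
proof (rule inj_onI)
  fix x y assume x: "x \<in> PF (n - 1)" and y: "y \<in> PF (n - 1)" and "Psi n x = Psi n y"
  then have "map (mirror n) x = map (mirror n) y" by (simp add: Psi_eq)
  moreover have "{1..n - 1} \<subseteq> {..n + 1}" by auto
  then have "set x \<union> set y \<subseteq> {..n + 1}"
    using set_subset_of_mem_PF[OF x] set_subset_of_mem_PF[OF y] by blast
  moreover have "inj_on (mirror n) {..n + 1}"
    by (rule inj_on_inverseI[of _ "mirror n"]) (simp add: mirror_mirror)
  ultimately show "x = y" by (metis inj_on_map_eq_map inj_on_subset)
qed

lemma Psi_mem_PF_k_diff:
  assumes "2 \<le> n" "x \<in> PF (n - 1)"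
  shows "Psi n x \<in> PF_k n (n - 1) - PF_k n (n - 2)"
proof -
  from assms(2) obtain occ where len: "length x = n - 1" and set: "set x \<subseteq> {1..n - 1}"
    and run: "naples_run (n - 1) 0 {} x = Some occ"
    by (auto simp: PF_def PF_k_def PP_def)
  have mirrored: "mirror n ` {1..n - 1} = {2..n}"
    using assms(1) image_mirror_atLeastAtMost[of "n - 1" n 1] by (simp add: mirror_def)
  have "occ \<subseteq> {1..n - 1}" "card occ = n - 1"
    using naples_run_Some_occupied[OF run] set len by auto
  then have "occ = {1..n - 1}" by (simp add: card_subset_eq)
  then have filled: "naples_run n k {} (map (mirror n) x) = Some {2..n}" if "n - 2 \<le> k" for k
    using naples_run_mirror_classical[OF _ set that run] mirrored by simp
  have "naples_spot n (n - 1) {2..n} n = Some 1"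
    by (rule naples_spot_backward) (use assms(1) in auto)
  moreover have "naples_spot n (n - 2) {2..n} n = None"
    using assms(1) by (auto simp: naples_spot_def)
  moreover have "Psi n x \<in> PP n"
  proof -
    have "mirror n ` set x \<subseteq> {2..n}" using image_mono[OF set, of "mirror n"] mirrored by simp
    then have "mirror n ` set x \<subseteq> {1..n}" by (rule order_trans) auto
    with len assms(1) show ?thesis by (simp add: Psi_eq PP_def)
  qed
  ultimately show ?thesis
    using filled[of "n - 1"] filled[of "n - 2"] by (simp add: PF_k_def Psi_eq naples_run_append)
qed

lemma PF_k_diff_subset_image_Psi:
  assumes "2 \<le> n" "y \<in> PF_k n (n - 1) - PF_k n (n - 2)"
  shows "y \<in> Psi n ` PF (n - 1)"
proof -
  from assms(2) have len: "length y = n" and set: "set y \<subseteq> {1..n}"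
    and ok: "naples_run n (n - 1) {} y \<noteq> None" and bad: "naples_run n (n - 2) {} y = None"
    by (auto simp: PF_k_def PP_def)
  obtain us vs occ where y: "y = us @ n # vs" and run: "naples_run n (n - 1) {} us = Some occ"
    and "{2..n} \<subseteq> occ" "1 \<notin> occ"
    using naples_run_pred_None_decomp[OF assms(1) set bad ok] by blast
  have "occ \<subseteq> {1..n}" "card occ = length us"
    using naples_run_Some_occupied[OF run] set y by auto
  moreover have "{1..n} = insert 1 {2..n}" using assms(1) by auto
  ultimately have "occ \<subseteq> {2..n}" using \<open>1 \<notin> occ\<close> by (simp add: subset_insert)
  from this \<open>{2..n} \<subseteq> occ\<close> have occ: "occ = {2..n}" by (rule subset_antisym)
  with \<open>card occ = length us\<close> have len_us: "length us = n - 1" by simp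
  with len y assms(1) have y: "y = us @ [n]" by simp
  have us: "set us \<subseteq> {2..n}" using naples_run_preferences_occupied[OF run] occ by simp
  define x where "x = map (mirror n) us"
  have mirror_x: "map (mirror n) x = us"
    unfolding x_def map_map
  proof (rule map_idI)
    fix b assume "b \<in> set us"
    with us have "b \<le> n + 1" by auto
    then show "(mirror n \<circ> mirror n) b = b" by (simp add: mirror_mirror)
  qed
  have set_x: "set x \<subseteq> {1..n - 1}"
    using image_mono[OF us, of "mirror n"] image_mirror_atLeastAtMost[of n n 2]
    by (simp add: x_def mirror_def)
  have "naples_run (n - 1) 0 {} x \<noteq> None"
  proof
    assume "naples_run (n - 1) 0 {} x = None"
    with naples_run_mirror_classical_None[OF _ set_x this] run mirror_x have "1 \<in> occ" by simp
    with \<open>1 \<notin> occ\<close> show False ..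
  qed
  then have "x \<in> PF (n - 1)"
    using set_x len_us by (simp add: PF_def PF_k_def PP_def x_def)
  moreover have "Psi n x = y" using mirror_x y by (simp add: Psi_eq)
  ultimately show ?thesis by blast
qed

theorem theorem2p3:
  fixes n :: nat
  assumes "n \<ge> 2"
  shows "bij_betw (Psi n) (PF (n - 1)) (PF_k n (n - 1) - PF_k n (n - 2))"
  unfolding bij_betw_def
  using inj_on_Psi Psi_mem_PF_k_diff[OF assms] PF_k_diff_subset_image_Psi[OF assms] by blast

end
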